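(* Let $n\ge2$ be an integer, and let $\mathcal S$ be the smallest collection of $(n+1)$-element sets of non-negative integers such that: (i) $\{j,j+1,\dots,j+n\}\in\mathcal S$ for each $j=0,1,\dots,n-2$; (ii) if $S\in\mathcal S$ then $2S:=\{2s: s\in S\}\in\mathcal S$; (iii) if $S,T\in\mathcal S$ satisfy $|S\cap T|=n$, then for each $a\in S\cap T$ the set $(S\cup T)\setminus\{a\}$ belongs to $\mathcal S$. Then $\{0,1,2,4,8,\dots,2^{n-1}\}\in\mathcal S$. *)

theory Defs
  imports Main
begin

text \<open>The smallest collection of sets of natural numbers closed under rules (i)-(iii).
  All its members automatically have exactly n+1 elements.\<close>
inductive_set SS :: "nat \<Rightarrow> nat set set" for n :: nat where
  base: "j \<le> n - 2 \<Longrightarrow> {j..j+n} \<in> SS n"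
| dbl: "S \<in> SS n \<Longrightarrow> (\<lambda>s. 2 * s) ` S \<in> SS n"
| merge: "S \<in> SS n \<Longrightarrow> T \<in> SS n \<Longrightarrow> card (S \<inter> T) = n \<Longrightarrow> a \<in> S \<inter> T
           \<Longrightarrow> (S \<union> T) - {a} \<in> SS n"

end

theory Submission
  imports Defs
begin

text \<open>Call a set V saturated if every (n+1)-element subset of V lies in SS n.
  Rule (iii) lets one exchange elements one at a time, so a saturated set V stays saturated
  after adding a point x as soon as a single member of SS n containing x lies in V \<union> {x}.
  Consequently the union of two saturated sets with n common elements is saturated, and rule (ii)
  shows that doubling preserves saturation. The intervals of rule (i) are saturated, hence so is
  {0..2n-2}, and then so is D(k) = {0..2n-2} \<union> 2 D(k-1), which meets 2 D(k-1) in
  {0,2,...,2n-2}. Finally D(n-1) contains 0, 1, 2, ..., 2^(n-1).\<close>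

lemma card_double_image: "card ((\<lambda>s::nat. 2 * s) ` S) = card S"
  by (simp add: card_image inj_on_def)

lemma card_SS: "S \<in> SS n \<Longrightarrow> card S = Suc n"
proof (induction rule: SS.induct)
  case (merge S T a)
  have "finite S" "finite T" using merge.IH card.infinite by fastforce+
  then have "card (S \<union> T) = Suc (Suc n)"
    using card_Un_Int[of S T] merge by simp
  then show ?case using merge.hyps(4) by (simp add: card_Diff_singleton)
qed (simp_all add: card_double_image)

lemma finite_SS: "S \<in> SS n \<Longrightarrow> finite S"
  using card_SS card.infinite by fastforce

lemma SS_exchange:
  assumes S: "S \<in> SS n" and T: "insert z (S - {x}) \<in> SS n"
    and "x \<in> S" "z \<notin> S" "y \<in> S" "y \<noteq> x"
  shows "insert z S - {y} \<in> SS n"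
proof -
  have inter: "S \<inter> insert z (S - {x}) = S - {x}" using \<open>z \<notin> S\<close> by blast
  have "card (S \<inter> insert z (S - {x})) = n"
    unfolding inter using card_SS[OF S] finite_SS[OF S] \<open>x \<in> S\<close>
    by (simp add: card_Diff_singleton)
  from SS.merge[OF S T this, of y] have "(S \<union> insert z (S - {x})) - {y} \<in> SS n"
    using assms inter by blast
  moreover have "(S \<union> insert z (S - {x})) - {y} = insert z S - {y}" using assms by blast
  ultimately show ?thesis by simp
qed

definition saturated :: "nat \<Rightarrow> nat set \<Rightarrow> bool" where
  "saturated n V \<longleftrightarrow> (\<forall>X \<subseteq> V. card X = Suc n \<longrightarrow> X \<in> SS n)"

lemma saturatedD: "saturated n V \<Longrightarrow> X \<subseteq> V \<Longrightarrow> card X = Suc n \<Longrightarrow> X \<in> SS n"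
  unfolding saturated_def by blast

text \<open>Induction on the number of elements of X not yet reached: each exchange step replaces an
  element of S outside X (other than x) by an element of X outside S, using that
  the exchanged set without x lies in the saturated V.\<close>

lemma saturated_insert_SS:
  assumes V: "saturated n V" and "x \<notin> V"
    and X: "X \<subseteq> insert x V" "card X = Suc n" "x \<in> X"
  shows "S \<in> SS n \<Longrightarrow> x \<in> S \<Longrightarrow> S \<subseteq> insert x V \<Longrightarrow> X \<in> SS n"
proof (induction "card (X - S)" arbitrary: S rule: less_induct)
  case (less S)
  have "finite X" using X(2) card.infinite by fastforce
  show ?case
  proof (cases "X \<subseteq> S")
    case True
    then have "X = S" using card_subset_eq finite_SS card_SS less.prems X by metis
    then show ?thesis using less.prems by simp
  next
    case False
    then obtain z where z: "z \<in> X" "z \<notin> S" by blast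
    have "\<not> S \<subseteq> X"
      using card_subset_eq[OF \<open>finite X\<close>] card_SS[OF less.prems(1)] X(2) z by metis
    then obtain y where y: "y \<in> S" "y \<notin> X" by blast
    have "insert z (S - {x}) \<in> SS n"
    proof (rule saturatedD[OF V])
      show "insert z (S - {x}) \<subseteq> V" using less.prems(2,3) z X(1) \<open>x \<notin> V\<close> by blast
      show "card (insert z (S - {x})) = Suc n"
        using card_SS[OF less.prems(1)] finite_SS[OF less.prems(1)] less.prems(2) z
        by (simp add: card_Diff_singleton)
    qed
    then have S': "insert z S - {y} \<in> SS n"
      using SS_exchange[OF less.prems(1)] less.prems(2) z y X(3) by blast
    have "X - (insert z S - {y}) \<subset> X - S" using z y by blast
    then have "card (X - (insert z S - {y})) < card (X - S)"
      using \<open>finite X\<close> by (meson finite_Diff psubset_card_mono)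
    moreover have "x \<in> insert z S - {y}" using less.prems(2) y X(3) by blast
    moreover have "insert z S - {y} \<subseteq> insert x V" using less.prems(3) z X(1) by blast
    ultimately show ?thesis using less.hyps S' by blast
  qed
qed

lemma saturated_insert:
  assumes "saturated n V" and "S \<in> SS n" "x \<in> S" "S \<subseteq> insert x V"
  shows "saturated n (insert x V)"
proof (cases "x \<in> V")
  case True
  then show ?thesis using assms(1) by (simp add: insert_absorb)
next
  case False
  show ?thesis unfolding saturated_def
  proof (intro allI impI)
    fix X assume X: "X \<subseteq> insert x V" "card X = Suc n"
    show "X \<in> SS n"
    proof (cases "x \<in> X")
      case True
      from saturated_insert_SS[OF assms(1) False X True assms(2-4)] show ?thesis .
    next
      case False
      then show ?thesis using X saturatedD[OF assms(1)] by blast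
    qed
  qed
qed

lemma saturated_Un:
  assumes V: "saturated n V" and W: "saturated n W" "finite W"
    and "n \<le> card (V \<inter> W)"
  shows "saturated n (V \<union> W)"
proof -
  obtain A where A: "A \<subseteq> V \<inter> W" "card A = n" "finite A"
    using obtain_subset_with_card_n[OF \<open>n \<le> card (V \<inter> W)\<close>] by metis
  have "saturated n (V \<union> F)" if "finite F" "F \<subseteq> W" for F
    using that
  proof (induction F rule: finite_induct)
    case empty
    then show ?case using V by simp
  next
    case (insert x F)
    show ?case
    proof (cases "x \<in> A")
      case True
      then have "V \<union> insert x F = V \<union> F" using A by blast
      then show ?thesis using insert by simp
    next
      case False
      have "insert x A \<in> SS n"
        by (rule saturatedD[OF W(1)]) (use A insert.prems False in auto)
      moreover have "saturated n (V \<union> F)" using insert.IH insert.prems by blast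
      ultimately have "saturated n (insert x (V \<union> F))"
        using saturated_insert[of n "V \<union> F" "insert x A" x] A by blast
      then show ?thesis by simp
    qed
  qed
  then show ?thesis using W(2) by blast
qed

lemma saturated_double_image:
  assumes "saturated n V" shows "saturated n ((\<lambda>s. 2 * s) ` V)"
  unfolding saturated_def
proof (intro allI impI)
  fix X assume X: "X \<subseteq> (\<lambda>s. 2 * s) ` V" "card X = Suc n"
  define Y where "Y = {y \<in> V. 2 * y \<in> X}"
  have XY: "X = (\<lambda>s. 2 * s) ` Y" using X(1) unfolding Y_def by blast
  have "card Y = Suc n" using X(2) unfolding XY card_double_image .
  moreover have "Y \<subseteq> V" unfolding Y_def by blast
  ultimately have "Y \<in> SS n" using saturatedD[OF assms] by blast
  then show "X \<in> SS n" unfolding XY by (rule SS.dbl)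
qed

lemma saturated_initial_interval:
  assumes "j \<le> n - 2" shows "saturated n {0..j + n}"
  using assms
proof (induction j)
  case 0
  have "{0..n} \<in> SS n" using SS.base[of 0 n] by simp
  then show ?case unfolding saturated_def using card_subset_eq[of "{0..n}"] by auto
next
  case (Suc j)
  have "{Suc j..Suc j + n} \<in> SS n" using SS.base Suc.prems by blast
  then have "saturated n {Suc j..Suc j + n}"
    unfolding saturated_def using card_subset_eq[of "{Suc j..Suc j + n}"] by auto
  moreover have "{0..Suc j + n} = {0..j + n} \<union> {Suc j..Suc j + n}" by auto
  moreover have "{0..j + n} \<inter> {Suc j..Suc j + n} = {Suc j..j + n}" by auto
  moreover have "n \<le> card ({0..j + n} \<inter> {Suc j..Suc j + n})" by simp
  ultimately show ?case using saturated_Un[of n "{0..j + n}"] Suc by simp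
qed

fun doubling_hull :: "nat \<Rightarrow> nat \<Rightarrow> nat set" where
  "doubling_hull n 0 = {0..2 * n - 2}"
| "doubling_hull n (Suc k) = {0..2 * n - 2} \<union> (\<lambda>s. 2 * s) ` doubling_hull n k"

lemma finite_doubling_hull: "finite (doubling_hull n k)"
  by (induction k) auto

lemma atLeastAtMost_subset_doubling_hull: "{0..2 * n - 2} \<subseteq> doubling_hull n k"
  by (cases k) auto

lemma saturated_doubling_hull:
  assumes "n \<ge> 2" shows "saturated n (doubling_hull n k)"
proof (induction k)
  case 0
  show ?case using saturated_initial_interval[of "n - 2" n] assms
    by (simp add: numeral_2_eq_2)
next
  case (Suc k)
  have base: "saturated n {0..2 * n - 2}"
    using saturated_initial_interval[of "n - 2" n] assms by (simp add: numeral_2_eq_2)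
  have evens: "(\<lambda>i. 2 * i) ` {0..<n} \<subseteq> {0..2 * n - 2} \<inter> (\<lambda>s. 2 * s) ` doubling_hull n k"
    using atLeastAtMost_subset_doubling_hull[of n k] assms by force
  have "n \<le> card ({0..2 * n - 2} \<inter> (\<lambda>s. 2 * s) ` doubling_hull n k)"
    using card_mono[OF _ evens] card_double_image[of "{0..<n}"] by simp
  from saturated_Un[OF base saturated_double_image[OF Suc.IH] _ this]
  show ?case using finite_doubling_hull by simp
qed

lemma power_of_two_in_doubling_hull:
  assumes "n \<ge> 2" "i \<le> k" shows "2 ^ i \<in> doubling_hull n k"
  using assms(2)
proof (induction k arbitrary: i)
  case 0
  then show ?case using assms(1) by simp
next
  case (Suc k)
  then show ?case using assms(1) by (cases i) auto
qed

theorem lemma4: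
  fixes n :: nat
  assumes "n \<ge> 2"
  shows "insert 0 ((\<lambda>i. 2 ^ i) ` {0..<n}) \<in> SS n"
proof (rule saturatedD[OF saturated_doubling_hull[OF assms, of "n - 1"]])
  show "insert 0 ((\<lambda>i. 2 ^ i) ` {0..<n}) \<subseteq> doubling_hull n (n - 1)"
    using power_of_two_in_doubling_hull[OF assms, of _ "n - 1"]
      atLeastAtMost_subset_doubling_hull[of n "n - 1"] by auto
  have "inj_on (\<lambda>i::nat. (2::nat) ^ i) {0..<n}" by (simp add: inj_on_def)
  then show "card (insert 0 ((\<lambda>i. (2::nat) ^ i) ` {0..<n})) = Suc n"
    by (subst card_insert_disjoint) (auto simp: card_image)
qed

end
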